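(* (Preservation.) For every typing context $\Gamma$, expressions $e, e'$, type $\tau$ and natural number $n$: if $\Gamma \vdash e : \tau$ and $e \Rightarrow^{n} e'$, then $\Gamma \vdash e' : \tau$.
   Context: This concerns the "filtered stepper calculus". Syntax: actions $a ::= \mathsf{skip} \mid \mathsf{step}$; gas $g ::= \mathsf{one} \mid \mathsf{all}$; priorities $l \in \mathbb{N}$. Patterns $p ::= x \mid p(p) \mid \lambda x.p \mid p+p \mid \underline{n} \mid \$e \mid \$v$ (the pattern typing rules also admit $\mathrm{fix}\,x.p$). A filter is a triple $f=(p,a,g)$. Expressions $e ::= x \mid e(e) \mid \lambda x.e \mid \mathrm{fix}\,x.e \mid e+e \mid \underline{n} \mid \mathrm{filter}_f(e) \mid \langle e\rangle^{a,g,l}$ (the last is called a residue), taken up to $\alpha$-equivalence; $\underline{n}$ ranges over numerals. Evaluation contexts $\mathcal{E} ::= \circ \mid \mathcal{E}(e) \mid e(\mathcal{E}) \mid \mathcal{E}+e \mid e+\mathcal{E} \mid \mathrm{filter}_f(\mathcal{E}) \mid \langle \mathcal{E}\rangle^{a,g,l}$, with exactly one hole; $\mathcal{E}[e]$ is the result of plugging $e$ into the hole. The values are exactly $\lambda x.e$ and numerals $\underline{n}$ (fixpoints, filters and residues are never values). Substitution $[v/x]e$ is standard capture-avoiding substitution, which passes through residues unchanged, through filters (substituting also into the filter's pattern), and stops at binders $\lambda x$ and $\mathrm{fix}\,x$ of the same variable. Stripping $|e|$ erases all filter and residue wrappers recursively. Matching $p \triangleright e$ is defined inductively: $\$e \triangleright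 e$ for all $e$; $\$v \triangleright v$ for every value $v$; $\underline{n}\triangleright\underline{n}$; $\lambda x_1.e_1 \triangleright \lambda x_2.e_2$ if $|e_1| \equiv_\alpha |e_2|$; $\mathrm{fix}\,x_1.e_1 \triangleright \mathrm{fix}\,x_2.e_2$ if $|e_1|\equiv_\alpha |e_2|$; $p_1(p_2)\triangleright e_1(e_2)$ if $p_1\triangleright e_1$ and $p_2\triangleright e_2$; $p_1+p_2\triangleright e_1+e_2$ likewise; there are no other rules. Instrumentation $e \to_{p,a,g,l} e'$ is the inductively defined relation: values and variables and $\mathrm{fix}\,x.e$ are left unchanged; $\langle e_0\rangle^{a',g',l'} \to_{p,a,g,l} \langle e\rangle^{a',g',l'}$ if $e_0\to_{p,a,g,l} e$; $\mathrm{filter}_{(p',a',g')}(e_0)\to_{p,a,g,l}\mathrm{filter}_{(p',a',g')}(e')$ if $e_0\to_{p,a,g,l} e$ and $e \to_{p',a',g',l+1} e'$; for $e_1(e_2)$, if $e_1\to_{p,a,g,l} e_1'$ and $e_2\to_{p,a,g,l} e_2'$ then $e_1(e_2)\to_{p,a,g,l}\langle e_1'(e_2')\rangle^{a,g,l}$ when $p\triangleright e_1(e_2)$ and $e_1(e_2)\to_{p,a,g,l} e_1'(e_2')$ when not; identically for $e_1+e_2$. Decomposition $e = \mathcal{E}[e_0]$ (with $e_0$ a redex) is the non-deterministic relation: $\langle v\rangle^{a,g,l}$ and $\mathrm{filter}_f(v)$ with $v$ a value decompose as hole $\circ$ with redex themselves; if $e$ decomposes as $\mathcal{E}$ and $e_0$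 then $\langle e\rangle^{a,g,l}$ decomposes as $\langle\mathcal{E}\rangle^{a,g,l}$ and $e_0$, and $\mathrm{filter}_f(e)$ as $\mathrm{filter}_f(\mathcal{E})$ and $e_0$; $e_1(e_2)$ decomposes as $\mathcal{E}_1(e_2)$ if $e_1$ decomposes as $\mathcal{E}_1$, as $e_1(\mathcal{E}_2)$ if $e_1$ is a value and $e_2$ decomposes as $\mathcal{E}_2$, and as $\circ$ with redex $e_1(e_2)$ if both are values; identically for $e_1+e_2$; $\mathrm{fix}\,x.e$ decomposes as $\circ$ with redex itself. Instruction transitions $e_0 \to e'$: $(\lambda x.e_1)(v)\to [v/x]e_1$ for a value $v$; $\underline{n_1}+\underline{n_2}\to\underline{n_1+n_2}$; $\mathrm{fix}\,x.e\to[\mathrm{fix}\,x.e/x]e$; $\langle v\rangle^{a,g,l}\to v$ and $\mathrm{filter}_f(v)\to v$ for a value $v$. Decay ${\downarrow}\mathcal{E}$ recursively removes every residue with gas $\mathsf{one}$ (replacing $\langle e\rangle^{a,\mathsf{one},l}$ by the decay of $e$), keeps residues with gas $\mathsf{all}$ and filters, applies recursively to all subterms, and maps the hole to the hole. Action selection $(a,l)\vdash\mathcal{E}\Downarrow a'$: $(a,l)\vdash\circ\Downarrow a$; for context nodes of the form application, addition or filter, the judgment passes unchanged into the subcontext containing the hole; $(a_0,l_0)\vdash\langle\mathcal{E}\rangle^{a,g,l}\Downarrow a'$ holds if either $l\le l_0$ and $(a_0,l_0)\vdash\mathcal{E}\Downarrow a'$, or $l>l_0$ and $(a,l)\vdash\mathcal{E}\Downarrow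 a'$. An expression is strippable if it has the form $\mathrm{filter}_f(e)$ or $\langle e\rangle^{a,g,l}$. Filtered stepping $e\Rightarrow^n e'$ is defined inductively: (i) $v\Rightarrow^0 v$ for every value $v$; (ii) if $e\to_{\$e,\mathsf{step},\mathsf{one},0} e_i$, $e_i=\mathcal{E}_0[e_0]$ (decomposition), $e_0\to e_t$, $e_1=({\downarrow}\mathcal{E}_0)[e_t]$, $(\mathsf{step},0)\vdash\mathcal{E}_0\Downarrow\mathsf{step}$ and $e_0$ is not strippable, then $e\Rightarrow^1 e_1$; (iii) with $e_i,\mathcal{E}_0,e_0,e_t,e_1$ as in (ii), if $(\mathsf{step},0)\vdash\mathcal{E}_0\Downarrow\mathsf{skip}$ and $e_1\Rightarrow^n e_2$, then $e\Rightarrow^{n+1}e_2$; (iv) with the same data, if $e_0$ is strippable and $e_1\Rightarrow^n e_2$, then $e\Rightarrow^{n+1}e_2$. Typing: types $\tau ::= \mathbb{N}\mid \tau\to\tau$. $\Gamma\vdash e:\tau$ is given by the usual Curry-style simply-typed rules: variables from $\Gamma$; $\lambda x.e : \tau_x\to\tau_e$ if $\Gamma,x{:}\tau_x\vdash e:\tau_e$; application; numerals have type $\mathbb{N}$; $e_1+e_2:\mathbb{N}$ if both summands have type $\mathbb{N}$; $\mathrm{fix}\,x.e:\tau$ if $\Gamma,x{:}\tau\vdash e:\tau$; $\mathrm{filter}_{(p,a,g)}(e):\tau_e$ if $\Gamma\vdash p:\tau_p$ for some $\tau_p$ and $\Gamma\vdash e:\tau_e$; $\langle e\rangle^{a,g,l}:\tau$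 if $\Gamma\vdash e:\tau$. Pattern typing $\Gamma\vdash p:\tau$: $\$e$ and $\$v$ have every type; variables, $\lambda$, application, numerals, addition and $\mathrm{fix}$ are typed by the analogous rules. *)

theory Defs
  imports Main
begin

datatype act = Skip | Step
datatype gas = GOne | GAll

datatype pat =
    PVar nat
  | PApp pat pat
  | PLam pat
  | PFix pat
  | PPlus pat pat
  | PNum nat
  | PAnyE
  | PAnyV

type_synonym filt = "pat \<times> act \<times> gas"

datatype exp =
    EVar nat
  | EApp exp exp
  | ELam exp
  | EFix exp
  | EPlus exp exp
  | ENum nat
  | EFilter filt exp
  | ERes exp act gas nat

datatype ctx =
    Hole
  | CAppL ctx exp
  | CAppR exp ctx
  | CPlusL ctx exp
  | CPlusR exp ctx
  | CFilter filt ctx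
  | CRes ctx act gas nat

fun plug :: "ctx \<Rightarrow> exp \<Rightarrow> exp" where
  "plug Hole e = e"
| "plug (CAppL E e2) e = EApp (plug E e) e2"
| "plug (CAppR e1 E) e = EApp e1 (plug E e)"
| "plug (CPlusL E e2) e = EPlus (plug E e) e2"
| "plug (CPlusR e1 E) e = EPlus e1 (plug E e)"
| "plug (CFilter f E) e = EFilter f (plug E e)"
| "plug (CRes E a g l) e = ERes (plug E e) a g l"

fun is_val :: "exp \<Rightarrow> bool" where
  "is_val (ELam e) = True"
| "is_val (ENum n) = True"
| "is_val _ = False"

fun strip :: "exp \<Rightarrow> exp" where
  "strip (EVar i) = EVar i"
| "strip (EApp e1 e2) = EApp (strip e1) (strip e2)"
| "strip (ELam e) = ELam (strip e)"
| "strip (EFix e) = EFix (strip e)"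
| "strip (EPlus e1 e2) = EPlus (strip e1) (strip e2)"
| "strip (ENum n) = ENum n"
| "strip (EFilter f e) = strip e"
| "strip (ERes e a g l) = strip e"

fun pat_of :: "exp \<Rightarrow> pat" where
  "pat_of (EVar i) = PVar i"
| "pat_of (EApp e1 e2) = PApp (pat_of e1) (pat_of e2)"
| "pat_of (ELam e) = PLam (pat_of e)"
| "pat_of (EFix e) = PFix (pat_of e)"
| "pat_of (EPlus e1 e2) = PPlus (pat_of e1) (pat_of e2)"
| "pat_of (ENum n) = PNum n"
| "pat_of (EFilter f e) = pat_of e"
| "pat_of (ERes e a g l) = pat_of e"

fun plift :: "nat \<Rightarrow> pat \<Rightarrow> pat" where
  "plift k (PVar i) = (if i < k then PVar i else PVar (Suc i))"
| "plift k (PApp p1 p2) = PApp (plift k p1) (plift k p2)"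
| "plift k (PLam p) = PLam (plift (Suc k) p)"
| "plift k (PFix p) = PFix (plift (Suc k) p)"
| "plift k (PPlus p1 p2) = PPlus (plift k p1) (plift k p2)"
| "plift k (PNum n) = PNum n"
| "plift k PAnyE = PAnyE"
| "plift k PAnyV = PAnyV"

fun lift :: "nat \<Rightarrow> exp \<Rightarrow> exp" where
  "lift k (EVar i) = (if i < k then EVar i else EVar (Suc i))"
| "lift k (EApp e1 e2) = EApp (lift k e1) (lift k e2)"
| "lift k (ELam e) = ELam (lift (Suc k) e)"
| "lift k (EFix e) = EFix (lift (Suc k) e)"
| "lift k (EPlus e1 e2) = EPlus (lift k e1) (lift k e2)"
| "lift k (ENum n) = ENum n"
| "lift k (EFilter (p, a, g) e) = EFilter (plift k p, a, g) (lift k e)"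
| "lift k (ERes e a g l) = ERes (lift k e) a g l"

fun psubst :: "nat \<Rightarrow> exp \<Rightarrow> pat \<Rightarrow> pat" where
  "psubst k v (PVar i) =
     (if i = k then pat_of (strip v) else if k < i then PVar (i - 1) else PVar i)"
| "psubst k v (PApp p1 p2) = PApp (psubst k v p1) (psubst k v p2)"
| "psubst k v (PLam p) = PLam (psubst (Suc k) (lift 0 v) p)"
| "psubst k v (PFix p) = PFix (psubst (Suc k) (lift 0 v) p)"
| "psubst k v (PPlus p1 p2) = PPlus (psubst k v p1) (psubst k v p2)"
| "psubst k v (PNum n) = PNum n"
| "psubst k v PAnyE = PAnyE"
| "psubst k v PAnyV = PAnyV"

fun subst :: "nat \<Rightarrow> exp \<Rightarrow> exp \<Rightarrow> exp" where
  "subst k v (EVar i) = (if i = k then v else if k < i then EVar (i - 1) else EVar i)"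
| "subst k v (EApp e1 e2) = EApp (subst k v e1) (subst k v e2)"
| "subst k v (ELam e) = ELam (subst (Suc k) (lift 0 v) e)"
| "subst k v (EFix e) = EFix (subst (Suc k) (lift 0 v) e)"
| "subst k v (EPlus e1 e2) = EPlus (subst k v e1) (subst k v e2)"
| "subst k v (ENum n) = ENum n"
| "subst k v (EFilter (p, a, g) e) = EFilter (psubst k v p, a, g) (subst k v e)"
| "subst k v (ERes e a g l) = ERes (subst k v e) a g l"

inductive matches :: "pat \<Rightarrow> exp \<Rightarrow> bool" where
  m_any: "matches PAnyE e"
| m_val: "is_val v \<Longrightarrow> matches PAnyV v"
| m_num: "matches (PNum n) (ENum n)"
| m_lam: "p = pat_of (strip e) \<Longrightarrow> matches (PLam p) (ELam e)"
| m_fix: "p = pat_of (strip e) \<Longrightarrow> matches (PFix p) (EFix e)"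
| m_app: "matches p1 e1 \<Longrightarrow> matches p2 e2 \<Longrightarrow> matches (PApp p1 p2) (EApp e1 e2)"
| m_plus: "matches p1 e1 \<Longrightarrow> matches p2 e2 \<Longrightarrow> matches (PPlus p1 p2) (EPlus e1 e2)"

inductive instr :: "pat \<Rightarrow> act \<Rightarrow> gas \<Rightarrow> nat \<Rightarrow> exp \<Rightarrow> exp \<Rightarrow> bool" where
  i_lam: "instr p a g l (ELam e) (ELam e)"
| i_num: "instr p a g l (ENum n) (ENum n)"
| i_var: "instr p a g l (EVar i) (EVar i)"
| i_fix: "instr p a g l (EFix e) (EFix e)"
| i_res: "instr p a g l e0 e \<Longrightarrow> instr p a g l (ERes e0 a' g' l') (ERes e a' g' l')"
| i_filter: "instr p a g l e0 e \<Longrightarrow> instr p' a' g' (Suc l) e e' \<Longrightarrow>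
     instr p a g l (EFilter (p', a', g') e0) (EFilter (p', a', g') e')"
| i_app_m: "instr p a g l e1 e1' \<Longrightarrow> instr p a g l e2 e2' \<Longrightarrow> matches p (EApp e1 e2) \<Longrightarrow>
     instr p a g l (EApp e1 e2) (ERes (EApp e1' e2') a g l)"
| i_app_n: "instr p a g l e1 e1' \<Longrightarrow> instr p a g l e2 e2' \<Longrightarrow> \<not> matches p (EApp e1 e2) \<Longrightarrow>
     instr p a g l (EApp e1 e2) (EApp e1' e2')"
| i_plus_m: "instr p a g l e1 e1' \<Longrightarrow> instr p a g l e2 e2' \<Longrightarrow> matches p (EPlus e1 e2) \<Longrightarrow>
     instr p a g l (EPlus e1 e2) (ERes (EPlus e1' e2') a g l)"
| i_plus_n: "instr p a g l e1 e1' \<Longrightarrow> instr p a g l e2 e2' \<Longrightarrow> \<not> matches p (EPlus e1 e2) \<Longrightarrow>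
     instr p a g l (EPlus e1 e2) (EPlus e1' e2')"

inductive decomp :: "exp \<Rightarrow> ctx \<Rightarrow> exp \<Rightarrow> bool" where
  d_res_val: "is_val v \<Longrightarrow> decomp (ERes v a g l) Hole (ERes v a g l)"
| d_filter_val: "is_val v \<Longrightarrow> decomp (EFilter f v) Hole (EFilter f v)"
| d_res: "decomp e E e0 \<Longrightarrow> decomp (ERes e a g l) (CRes E a g l) e0"
| d_filter: "decomp e E e0 \<Longrightarrow> decomp (EFilter f e) (CFilter f E) e0"
| d_appL: "decomp e1 E e0 \<Longrightarrow> decomp (EApp e1 e2) (CAppL E e2) e0"
| d_appR: "is_val e1 \<Longrightarrow> decomp e2 E e0 \<Longrightarrow> decomp (EApp e1 e2) (CAppR e1 E) e0"
| d_app: "is_val e1 \<Longrightarrow> is_val e2 \<Longrightarrow> decomp (EApp e1 e2) Hole (EApp e1 e2)"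
| d_plusL: "decomp e1 E e0 \<Longrightarrow> decomp (EPlus e1 e2) (CPlusL E e2) e0"
| d_plusR: "is_val e1 \<Longrightarrow> decomp e2 E e0 \<Longrightarrow> decomp (EPlus e1 e2) (CPlusR e1 E) e0"
| d_plus: "is_val e1 \<Longrightarrow> is_val e2 \<Longrightarrow> decomp (EPlus e1 e2) Hole (EPlus e1 e2)"
| d_fix: "decomp (EFix e) Hole (EFix e)"

inductive instruction :: "exp \<Rightarrow> exp \<Rightarrow> bool" where
  t_beta: "is_val v \<Longrightarrow> instruction (EApp (ELam e1) v) (subst 0 v e1)"
| t_plus: "instruction (EPlus (ENum n1) (ENum n2)) (ENum (n1 + n2))"
| t_fix: "instruction (EFix e) (subst 0 (EFix e) e)"
| t_res: "is_val v \<Longrightarrow> instruction (ERes v a g l) v"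
| t_filter: "is_val v \<Longrightarrow> instruction (EFilter f v) v"

fun decay_exp :: "exp \<Rightarrow> exp" where
  "decay_exp (EVar i) = EVar i"
| "decay_exp (EApp e1 e2) = EApp (decay_exp e1) (decay_exp e2)"
| "decay_exp (ELam e) = ELam (decay_exp e)"
| "decay_exp (EFix e) = EFix (decay_exp e)"
| "decay_exp (EPlus e1 e2) = EPlus (decay_exp e1) (decay_exp e2)"
| "decay_exp (ENum n) = ENum n"
| "decay_exp (EFilter f e) = EFilter f (decay_exp e)"
| "decay_exp (ERes e a g l) = (if g = GOne then decay_exp e else ERes (decay_exp e) a g l)"

fun decay :: "ctx \<Rightarrow> ctx" where
  "decay Hole = Hole"
| "decay (CAppL E e) = CAppL (decay E) (decay_exp e)"
| "decay (CAppR e E) = CAppR (decay_exp e) (decay E)"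
| "decay (CPlusL E e) = CPlusL (decay E) (decay_exp e)"
| "decay (CPlusR e E) = CPlusR (decay_exp e) (decay E)"
| "decay (CFilter f E) = CFilter f (decay E)"
| "decay (CRes E a g l) = (if g = GOne then decay E else CRes (decay E) a g l)"

inductive select :: "act \<Rightarrow> nat \<Rightarrow> ctx \<Rightarrow> act \<Rightarrow> bool" where
  s_hole: "select a l Hole a"
| s_appL: "select a l E a' \<Longrightarrow> select a l (CAppL E e) a'"
| s_appR: "select a l E a' \<Longrightarrow> select a l (CAppR e E) a'"
| s_plusL: "select a l E a' \<Longrightarrow> select a l (CPlusL E e) a'"
| s_plusR: "select a l E a' \<Longrightarrow> select a l (CPlusR e E) a'"
| s_filter: "select a l E a' \<Longrightarrow> select a l (CFilter f E) a'"
| s_res_le: "l \<le> l0 \<Longrightarrow> select a0 l0 E a' \<Longrightarrow> select a0 l0 (CRes E a g l) a'"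
| s_res_gt: "l > l0 \<Longrightarrow> select a l E a' \<Longrightarrow> select a0 l0 (CRes E a g l) a'"

fun strippable :: "exp \<Rightarrow> bool" where
  "strippable (EFilter f e) = True"
| "strippable (ERes e a g l) = True"
| "strippable _ = False"

inductive fstep :: "exp \<Rightarrow> nat \<Rightarrow> exp \<Rightarrow> bool" where
  fs_val: "is_val v \<Longrightarrow> fstep v 0 v"
| fs_step: "instr PAnyE Step GOne 0 e ei \<Longrightarrow> decomp ei E0 e0 \<Longrightarrow> instruction e0 et \<Longrightarrow>
     e1 = plug (decay E0) et \<Longrightarrow> select Step 0 E0 Step \<Longrightarrow> \<not> strippable e0 \<Longrightarrow>
     fstep e 1 e1"
| fs_skip: "instr PAnyE Step GOne 0 e ei \<Longrightarrow> decomp ei E0 e0 \<Longrightarrow> instruction e0 et \<Longrightarrow>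
     e1 = plug (decay E0) et \<Longrightarrow> select Step 0 E0 Skip \<Longrightarrow> fstep e1 n e2 \<Longrightarrow>
     fstep e (Suc n) e2"
| fs_strip: "instr PAnyE Step GOne 0 e ei \<Longrightarrow> decomp ei E0 e0 \<Longrightarrow> instruction e0 et \<Longrightarrow>
     e1 = plug (decay E0) et \<Longrightarrow> strippable e0 \<Longrightarrow> fstep e1 n e2 \<Longrightarrow>
     fstep e (Suc n) e2"

datatype ty = TNat | TArr ty ty

inductive ptyping :: "ty list \<Rightarrow> pat \<Rightarrow> ty \<Rightarrow> bool" where
  pt_anye: "ptyping \<Gamma> PAnyE \<tau>"
| pt_anyv: "ptyping \<Gamma> PAnyV \<tau>"
| pt_var: "i < length \<Gamma> \<Longrightarrow> ptyping \<Gamma> (PVar i) (\<Gamma> ! i)"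
| pt_lam: "ptyping (\<tau>x # \<Gamma>) p \<tau>e \<Longrightarrow> ptyping \<Gamma> (PLam p) (TArr \<tau>x \<tau>e)"
| pt_app: "ptyping \<Gamma> p1 (TArr \<tau>1 \<tau>2) \<Longrightarrow> ptyping \<Gamma> p2 \<tau>1 \<Longrightarrow> ptyping \<Gamma> (PApp p1 p2) \<tau>2"
| pt_num: "ptyping \<Gamma> (PNum n) TNat"
| pt_plus: "ptyping \<Gamma> p1 TNat \<Longrightarrow> ptyping \<Gamma> p2 TNat \<Longrightarrow> ptyping \<Gamma> (PPlus p1 p2) TNat"
| pt_fix: "ptyping (\<tau> # \<Gamma>) p \<tau> \<Longrightarrow> ptyping \<Gamma> (PFix p) \<tau>"

inductive typing :: "ty list \<Rightarrow> exp \<Rightarrow> ty \<Rightarrow> bool" where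
  t_var: "i < length \<Gamma> \<Longrightarrow> typing \<Gamma> (EVar i) (\<Gamma> ! i)"
| t_lam: "typing (\<tau>x # \<Gamma>) e \<tau>e \<Longrightarrow> typing \<Gamma> (ELam e) (TArr \<tau>x \<tau>e)"
| t_app: "typing \<Gamma> e1 (TArr \<tau>1 \<tau>2) \<Longrightarrow> typing \<Gamma> e2 \<tau>1 \<Longrightarrow> typing \<Gamma> (EApp e1 e2) \<tau>2"
| t_num: "typing \<Gamma> (ENum n) TNat"
| t_plus: "typing \<Gamma> e1 TNat \<Longrightarrow> typing \<Gamma> e2 TNat \<Longrightarrow> typing \<Gamma> (EPlus e1 e2) TNat"
| t_fix: "typing (\<tau> # \<Gamma>) e \<tau> \<Longrightarrow> typing \<Gamma> (EFix e) \<tau>"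
| t_filter: "ptyping \<Gamma> p \<tau>p \<Longrightarrow> typing \<Gamma> e \<tau>e \<Longrightarrow> typing \<Gamma> (EFilter (p, a, g) e) \<tau>e"
| t_res: "typing \<Gamma> e \<tau> \<Longrightarrow> typing \<Gamma> (ERes e a g l) \<tau>"

end

theory Submission
  imports Defs
begin

text \<open>Each ingredient of a single step preserves types: instrumentation and decay only add or
  remove residues, which are transparent to typing; a decomposition splits the term into a
  redex and a context, and replacing the redex by a term of the same type (also inside the
  decayed context) keeps the type; and the instruction transitions preserve types by the
  substitution lemma. Since substitution also rewrites filter patterns, that lemma is needed for
  pattern typing too, where the substituted expression enters as the pattern read off from its
  stripped form.\<close>

inductive_cases typing_ELamE: "typing \<Gamma> (ELam e) \<tau>"
inductive_cases typing_EAppE: "typing \<Gamma> (EApp e1 e2) \<tau>"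
inductive_cases typing_EPlusE: "typing \<Gamma> (EPlus e1 e2) \<tau>"
inductive_cases typing_EFixE: "typing \<Gamma> (EFix e) \<tau>"
inductive_cases typing_EFilterE: "typing \<Gamma> (EFilter (p, a, g) e) \<tau>"
inductive_cases typing_EResE: "typing \<Gamma> (ERes e a g l) \<tau>"

lemma typing_EVarI: "i < length \<Gamma> \<Longrightarrow> \<Gamma> ! i = \<tau> \<Longrightarrow> typing \<Gamma> (EVar i) \<tau>"
  using t_var by blast

lemma ptyping_PVarI: "i < length \<Gamma> \<Longrightarrow> \<Gamma> ! i = \<tau> \<Longrightarrow> ptyping \<Gamma> (PVar i) \<tau>"
  using pt_var by blast

lemma ptyping_pat_of_strip: "typing \<Gamma> e \<tau> \<Longrightarrow> ptyping \<Gamma> (pat_of (strip e)) \<tau>"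
  by (induction rule: typing.induct) (auto intro: ptyping.intros)

lemma nth_insert:
  "k \<le> length \<Gamma> \<Longrightarrow>
   (take k \<Gamma> @ U # drop k \<Gamma>) ! j = (if j < k then \<Gamma> ! j else if j = k then U else \<Gamma> ! (j - 1))"
  by (simp add: nth_append min_def)

lemma ptyping_plift:
  "ptyping \<Gamma> p \<tau> \<Longrightarrow> k \<le> length \<Gamma> \<Longrightarrow> ptyping (take k \<Gamma> @ U # drop k \<Gamma>) (plift k p) \<tau>"
proof (induction arbitrary: k rule: ptyping.induct)
  case (pt_var i \<Gamma>)
  then show ?case by (auto intro!: ptyping_PVarI simp: nth_insert)
next
  case (pt_lam \<tau>x \<Gamma> p \<tau>e)
  then show ?case using pt_lam.IH[of "Suc k"] by (auto intro: ptyping.intros)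
next
  case (pt_fix \<tau> \<Gamma> p)
  then show ?case using pt_fix.IH[of "Suc k"] by (auto intro: ptyping.intros)
qed (auto intro: ptyping.intros)

lemma typing_lift:
  "typing \<Gamma> e \<tau> \<Longrightarrow> k \<le> length \<Gamma> \<Longrightarrow> typing (take k \<Gamma> @ U # drop k \<Gamma>) (lift k e) \<tau>"
proof (induction arbitrary: k rule: typing.induct)
  case (t_var i \<Gamma>)
  then show ?case by (auto intro!: typing_EVarI simp: nth_insert)
next
  case (t_lam \<tau>x \<Gamma> e \<tau>e)
  then show ?case using t_lam.IH[of "Suc k"] by (auto intro: typing.intros)
next
  case (t_fix \<tau> \<Gamma> e)
  then show ?case using t_fix.IH[of "Suc k"] by (auto intro: typing.intros)
next
  case (t_filter \<Gamma> p \<tau>p e \<tau>e a g)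
  then show ?case using ptyping_plift[OF t_filter(1)] by (auto intro: typing.intros)
qed (auto intro: typing.intros)

lemma typing_lift0: "typing \<Gamma> e \<tau> \<Longrightarrow> typing (U # \<Gamma>) (lift 0 e) \<tau>"
  using typing_lift[of \<Gamma> e \<tau> 0 U] by simp

lemma nth_delete:
  "k < length \<Gamma> \<Longrightarrow> (take k \<Gamma> @ drop (Suc k) \<Gamma>) ! j = \<Gamma> ! (if j < k then j else Suc j)"
  by (simp add: nth_append min_def)

lemma ptyping_psubst:
  "ptyping \<Gamma> p \<tau> \<Longrightarrow> k < length \<Gamma> \<Longrightarrow> typing (take k \<Gamma> @ drop (Suc k) \<Gamma>) v (\<Gamma> ! k) \<Longrightarrow>
   ptyping (take k \<Gamma> @ drop (Suc k) \<Gamma>) (psubst k v p) \<tau>"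
proof (induction arbitrary: k v rule: ptyping.induct)
  case (pt_var i \<Gamma>)
  then show ?case
    by (auto intro!: ptyping_PVarI ptyping_pat_of_strip simp: nth_delete)
next
  case (pt_lam \<tau>x \<Gamma> p \<tau>e)
  then show ?case using pt_lam.IH[of "Suc k" "lift 0 v"] by (auto intro: ptyping.intros typing_lift0)
next
  case (pt_fix \<tau> \<Gamma> p)
  then show ?case using pt_fix.IH[of "Suc k" "lift 0 v"] by (auto intro: ptyping.intros typing_lift0)
next
  case (pt_app \<Gamma> p1 \<tau>1 \<tau>2 p2)
  then show ?case by (metis psubst.simps(2) ptyping.pt_app)
qed (auto intro: ptyping.intros)

lemma typing_subst:
  "typing \<Gamma> e \<tau> \<Longrightarrow> k < length \<Gamma> \<Longrightarrow> typing (take k \<Gamma> @ drop (Suc k) \<Gamma>) v (\<Gamma> ! k) \<Longrightarrow>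
   typing (take k \<Gamma> @ drop (Suc k) \<Gamma>) (subst k v e) \<tau>"
proof (induction arbitrary: k v rule: typing.induct)
  case (t_var i \<Gamma>)
  then show ?case by (auto intro!: typing_EVarI simp: nth_delete)
next
  case (t_lam \<tau>x \<Gamma> e \<tau>e)
  then show ?case using t_lam.IH[of "Suc k" "lift 0 v"] by (auto intro: typing.intros typing_lift0)
next
  case (t_fix \<tau> \<Gamma> e)
  then show ?case using t_fix.IH[of "Suc k" "lift 0 v"] by (auto intro: typing.intros typing_lift0)
next
  case (t_filter \<Gamma> p \<tau>p e \<tau>e a g)
  then show ?case by (metis ptyping_psubst subst.simps(7) typing.t_filter)
next
  case (t_app \<Gamma> e1 \<tau>1 \<tau>2 e2)
  then show ?case by (metis subst.simps(2) typing.t_app)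
qed (auto intro: typing.intros)

lemma typing_subst0: "typing (T # \<Gamma>) e \<tau> \<Longrightarrow> typing \<Gamma> v T \<Longrightarrow> typing \<Gamma> (subst 0 v e) \<tau>"
  using typing_subst[of "T # \<Gamma>" e \<tau> 0 v] by simp

lemma instr_preserves_typing: "instr p a g l e e' \<Longrightarrow> typing \<Gamma> e \<tau> \<Longrightarrow> typing \<Gamma> e' \<tau>"
  by (induction arbitrary: \<Gamma> \<tau> rule: instr.induct)
     (fastforce elim: typing_EResE typing_EFilterE typing_EAppE typing_EPlusE intro: typing.intros)+

lemma decomp_plug: "decomp e E e0 \<Longrightarrow> e = plug E e0"
  by (induction rule: decomp.induct) auto

lemma typing_decay_exp: "typing \<Gamma> e \<tau> \<Longrightarrow> typing \<Gamma> (decay_exp e) \<tau>"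
  by (induction rule: typing.induct) (auto intro: typing.intros)

lemma typing_plug_decay:
  "typing \<Gamma> (plug E e0) \<tau> \<Longrightarrow>
   \<exists>\<tau>0. typing \<Gamma> e0 \<tau>0 \<and> (\<forall>e. typing \<Gamma> e \<tau>0 \<longrightarrow> typing \<Gamma> (plug (decay E) e) \<tau>)"
proof (induction E arbitrary: \<tau>)
  case (CFilter f E)
  then show ?case by (cases f rule: prod_cases3) (fastforce elim!: typing_EFilterE intro: typing.intros)
qed (fastforce elim!: typing_EAppE typing_EPlusE typing_EResE intro: typing.intros typing_decay_exp)+

lemma instruction_preserves_typing: "instruction e e' \<Longrightarrow> typing \<Gamma> e \<tau> \<Longrightarrow> typing \<Gamma> e' \<tau>"
  by (induction rule: instruction.induct)
     (auto elim!: typing_EAppE typing_ELamE typing_EFixE typing_EPlusE typing_EResE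
        typing_EFilterE intro: typing_subst0 typing.intros)

lemma step_preserves_typing:
  assumes "instr PAnyE Step GOne 0 e ei" and "decomp ei E0 e0" and "instruction e0 et"
    and "typing \<Gamma> e \<tau>"
  shows "typing \<Gamma> (plug (decay E0) et) \<tau>"
proof -
  have "typing \<Gamma> ei \<tau>"
    using assms(1,4) by (rule instr_preserves_typing)
  then have "typing \<Gamma> (plug E0 e0) \<tau>"
    using decomp_plug[OF assms(2)] by simp
  then obtain \<tau>0 where "typing \<Gamma> e0 \<tau>0"
    and "\<forall>e'. typing \<Gamma> e' \<tau>0 \<longrightarrow> typing \<Gamma> (plug (decay E0) e') \<tau>"
    using typing_plug_decay by blast
  with assms(3) show ?thesis using instruction_preserves_typing by blast
qed

theorem theorem1:
  fixes \<Gamma> :: "ty list" and e e' :: exp and \<tau> :: ty and n :: nat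
  assumes "typing \<Gamma> e \<tau>" and "fstep e n e'"
  shows "typing \<Gamma> e' \<tau>"
  using assms(2,1)
  by (induction rule: fstep.induct) (auto dest: step_preserves_typing)

end
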